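(* Consider the two-layer multi-item order fulfillment problem described in the context with a single FDC ($K=1$), fixed costs $f_0\ge0$, $f_1>0$, and variable costs satisfying $a\le c_{k,t}^i\le b$ for constants $b>a>0$. Let \textsc{Cost-Comparison AdjV-Priority} be the following policy. In each period $t$, for each item $i$, set $\hat m_{1,t}^i=\min\{S_t^i,I_{1,t-1}^i\}$ if $c_{1,t}^i<\sqrt{a/b}\,c_{0,t}^i$ and $\hat m_{1,t}^i=0$ otherwise, and $\hat m_{0,t}^i=S_t^i-\hat m_{1,t}^i$. If \[\sum_{k=0,1}\Big[f_k\,\mathbb{I}\Big(\sum_{i=1}^n\hat m_{k,t}^i>0\Big)+\sum_{i=1}^nc_{k,t}^i\hat m_{k,t}^i\Big]>f_0+\sum_{i=1}^nc_{0,t}^iS_t^i,\] fulfill the whole order from the RDC ($m_{0,t}^i=S_t^i$, $m_{1,t}^i=0$); otherwise set $m_{k,t}^i=\hat m_{k,t}^i$. Then \[\mathfrak R(\textsc{Cost-Comparison AdjV-Priority})\le 1+\max\left\{\frac{f_0}{f_1},\ \sqrt{\frac ba}\right\}.\]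
   Context: Problem with one FDC (index $1$) and one RDC (index $0$, unlimited inventory). The FDC initially holds $I_{1,0}^i\ge0$ units of item $i\in[n]$, never replenished. In periods $t=1,\dots,T$ an order $\boldsymbol S_t=(S_t^i)_i$ of nonnegative integers arrives; after observing it and the variable costs $c_{k,t}^i$, the policy must immediately and irrevocably choose $m_{0,t}^i,m_{1,t}^i\ge0$ with $m_{0,t}^i+m_{1,t}^i=S_t^i$ and $m_{1,t}^i\le I_{1,t-1}^i$, where $I_{1,t}^i=I_{1,0}^i-\sum_{\tau\le t}m_{1,\tau}^i$. Period cost $\sum_{k=0,1}[f_k\mathbb{I}(\sum_im_{k,t}^i>0)+\sum_ic_{k,t}^im_{k,t}^i]$; total cost is the sum over periods. Online policies decide in period $t$ using only fixed costs, initial inventories and orders/variable costs up to $t$ (and the known constants $a,b$). $\mathrm{ALG}(I)$: (expected) total cost; $\mathrm{OPT}(I)$: offline optimal total cost. $\mathfrak R(\mathrm{ALG})$ is the supremum of $\mathrm{ALG}(I)/\mathrm{OPT}(I)$ over all $n,T$, initial inventories, variable costs in $[a,b]$ and order sequences. *)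

theory Defs
  imports Complex_Main
begin

text \<open>Model. Items are indexed by i < n, periods by t in {1..T}.
  Orders: S t i (nat). Variable costs: c0 t i (RDC), c1 t i (FDC).
  Fulfillment plan: m0 t i (from RDC), m1 t i (from FDC).\<close>

definition ind :: "bool \<Rightarrow> real" where
  "ind P = (if P then 1 else 0)"

definition period_cost ::
  "real \<Rightarrow> real \<Rightarrow> nat \<Rightarrow> (nat \<Rightarrow> nat \<Rightarrow> real) \<Rightarrow> (nat \<Rightarrow> nat \<Rightarrow> real)
   \<Rightarrow> (nat \<Rightarrow> nat \<Rightarrow> nat) \<Rightarrow> (nat \<Rightarrow> nat \<Rightarrow> nat) \<Rightarrow> nat \<Rightarrow> real" where
  "period_cost f0 f1 n c0 c1 m0 m1 t =
     (f0 * ind ((\<Sum>i<n. m0 t i) > 0) + (\<Sum>i<n. c0 t i * real (m0 t i)))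
   + (f1 * ind ((\<Sum>i<n. m1 t i) > 0) + (\<Sum>i<n. c1 t i * real (m1 t i)))"

definition total_cost ::
  "real \<Rightarrow> real \<Rightarrow> nat \<Rightarrow> nat \<Rightarrow> (nat \<Rightarrow> nat \<Rightarrow> real) \<Rightarrow> (nat \<Rightarrow> nat \<Rightarrow> real)
   \<Rightarrow> (nat \<Rightarrow> nat \<Rightarrow> nat) \<Rightarrow> (nat \<Rightarrow> nat \<Rightarrow> nat) \<Rightarrow> real" where
  "total_cost f0 f1 n T c0 c1 m0 m1 = (\<Sum>t\<in>{1..T}. period_cost f0 f1 n c0 c1 m0 m1 t)"

definition fdc_inv :: "(nat \<Rightarrow> nat) \<Rightarrow> (nat \<Rightarrow> nat \<Rightarrow> nat) \<Rightarrow> nat \<Rightarrow> nat \<Rightarrow> int" where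
  "fdc_inv I0 m1 t i = int (I0 i) - (\<Sum>\<tau>\<in>{1..t}. int (m1 \<tau> i))"

definition feasible ::
  "nat \<Rightarrow> nat \<Rightarrow> (nat \<Rightarrow> nat) \<Rightarrow> (nat \<Rightarrow> nat \<Rightarrow> nat)
   \<Rightarrow> (nat \<Rightarrow> nat \<Rightarrow> nat) \<Rightarrow> (nat \<Rightarrow> nat \<Rightarrow> nat) \<Rightarrow> bool" where
  "feasible n T I0 S m0 m1 \<longleftrightarrow>
     (\<forall>t\<in>{1..T}. \<forall>i<n. m0 t i + m1 t i = S t i \<and> int (m1 t i) \<le> fdc_inv I0 m1 (t - 1) i)"

definition OPT ::
  "real \<Rightarrow> real \<Rightarrow> nat \<Rightarrow> nat \<Rightarrow> (nat \<Rightarrow> nat) \<Rightarrow> (nat \<Rightarrow> nat \<Rightarrow> nat)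
   \<Rightarrow> (nat \<Rightarrow> nat \<Rightarrow> real) \<Rightarrow> (nat \<Rightarrow> nat \<Rightarrow> real) \<Rightarrow> real" where
  "OPT f0 f1 n T I0 S c0 c1 =
     Inf {total_cost f0 f1 n T c0 c1 m0 m1 | m0 m1. feasible n T I0 S m0 m1}"

text \<open>Cost-Comparison AdjV-Priority. Given the current FDC inventory vector I
  (= I_{1,t-1}), the tentative FDC amounts in period t.\<close>
definition hat_m1 ::
  "real \<Rightarrow> real \<Rightarrow> (nat \<Rightarrow> nat \<Rightarrow> nat) \<Rightarrow> (nat \<Rightarrow> nat \<Rightarrow> real) \<Rightarrow> (nat \<Rightarrow> nat \<Rightarrow> real)
   \<Rightarrow> (nat \<Rightarrow> nat) \<Rightarrow> nat \<Rightarrow> nat \<Rightarrow> nat" where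
  "hat_m1 a b S c0 c1 I t i =
     (if c1 t i < sqrt (a / b) * c0 t i then min (S t i) (I i) else 0)"

definition ccav_step ::
  "real \<Rightarrow> real \<Rightarrow> real \<Rightarrow> real \<Rightarrow> nat \<Rightarrow> (nat \<Rightarrow> nat \<Rightarrow> nat)
   \<Rightarrow> (nat \<Rightarrow> nat \<Rightarrow> real) \<Rightarrow> (nat \<Rightarrow> nat \<Rightarrow> real) \<Rightarrow> (nat \<Rightarrow> nat) \<Rightarrow> nat \<Rightarrow> nat \<Rightarrow> nat" where
  "ccav_step a b f0 f1 n S c0 c1 I t =
     (let h1 = hat_m1 a b S c0 c1 I t;
          h0 = (\<lambda>i. S t i - h1 i)
      in if period_cost f0 f1 n c0 c1 (\<lambda>_. h0) (\<lambda>_. h1) t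
              > f0 + (\<Sum>i<n. c0 t i * real (S t i))
         then (\<lambda>i. 0) else h1)"

primrec ccav_inv ::
  "real \<Rightarrow> real \<Rightarrow> real \<Rightarrow> real \<Rightarrow> nat \<Rightarrow> (nat \<Rightarrow> nat) \<Rightarrow> (nat \<Rightarrow> nat \<Rightarrow> nat)
   \<Rightarrow> (nat \<Rightarrow> nat \<Rightarrow> real) \<Rightarrow> (nat \<Rightarrow> nat \<Rightarrow> real) \<Rightarrow> nat \<Rightarrow> nat \<Rightarrow> nat" where
  "ccav_inv a b f0 f1 n I0 S c0 c1 0 = I0"
| "ccav_inv a b f0 f1 n I0 S c0 c1 (Suc t) =
     (\<lambda>i. ccav_inv a b f0 f1 n I0 S c0 c1 t i
          - ccav_step a b f0 f1 n S c0 c1 (ccav_inv a b f0 f1 n I0 S c0 c1 t) (Suc t) i)"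

definition ccav_m1 where
  "ccav_m1 a b f0 f1 n I0 S c0 c1 t i =
     ccav_step a b f0 f1 n S c0 c1 (ccav_inv a b f0 f1 n I0 S c0 c1 (t - 1)) t i"

definition ccav_m0 where
  "ccav_m0 a b f0 f1 n I0 S c0 c1 t i = S t i - ccav_m1 a b f0 f1 n I0 S c0 c1 t i"

definition ALG_ccav ::
  "real \<Rightarrow> real \<Rightarrow> real \<Rightarrow> real \<Rightarrow> nat \<Rightarrow> nat \<Rightarrow> (nat \<Rightarrow> nat) \<Rightarrow> (nat \<Rightarrow> nat \<Rightarrow> nat)
   \<Rightarrow> (nat \<Rightarrow> nat \<Rightarrow> real) \<Rightarrow> (nat \<Rightarrow> nat \<Rightarrow> real) \<Rightarrow> real" where
  "ALG_ccav a b f0 f1 n T I0 S c0 c1 =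
     total_cost f0 f1 n T c0 c1 (ccav_m0 a b f0 f1 n I0 S c0 c1) (ccav_m1 a b f0 f1 n I0 S c0 c1)"

end

theory Submission
  imports Defs
begin

(* Amortize against an arbitrary feasible plan with the potential
   Phi t = b * (SUM i. max 0 (J t i - I t i)), where J and I are the FDC inventories of the plan
   and of the policy. With s = sqrt (b/a) and R = 1 + max (f0/f1) s, every period satisfies
   ALG t + Phi t - Phi (t-1) <= R * PLAN t.
   Item by item: if the plan ships more from the FDC than the policy's tentative amount, either the
   policy's stock is exhausted, and the drop of Phi by b per unit pays for the RDC shipment, or the
   item is not cheap at the FDC, so its RDC cost is at most s times its FDC cost; if the policy ships
   more, each extra unit raises Phi by at most b <= s * c0. The fixed costs of the tentative plan are
   at most f0 + f1 <= R * f1 when the plan uses the FDC; otherwise the cost comparison lets the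
   policy pay no more than the all-RDC cost, which the plan pays too. Summing over periods,
   Phi 0 = 0 and Phi T >= 0 give ALG <= R times the cost of every feasible plan. *)

lemma cheap_iff_threshold:
  fixes a b c0 c1 :: real
  assumes "0 < a" "a < b"
  shows "c1 < sqrt (a / b) * c0 \<longleftrightarrow> sqrt (b / a) * c1 < c0"
proof -
  have "sqrt (a / b) = 1 / sqrt (b / a)" by (simp add: real_sqrt_divide)
  moreover have "0 < sqrt (b / a)" using assms by simp
  ultimately show ?thesis by (simp add: field_simps)
qed

lemma cheap_costs:
  fixes a b s c0 c1 :: real
  assumes "0 \<le> a" "a \<le> c1" "1 \<le> s" "b \<le> s\<^sup>2 * a" "s * c1 < c0"
  shows "c1 < c0" "b \<le> s * c0"
proof -
  show "c1 < c0" using assms by (smt (verit) mult_le_cancel_right1)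
  have "s\<^sup>2 * a \<le> s\<^sup>2 * c1" using assms(2) by (simp add: mult_left_mono)
  then have "b \<le> s * (s * c1)" using assms(4) by (simp add: power2_eq_square mult.assoc)
  also have "\<dots> \<le> s * c0" using assms(3,5) by simp
  finally show "b \<le> s * c0" .
qed

(* One item in one period: the order is S, the plan ships p from the FDC and holds J there before
   the period; the policy tentatively ships h from the FDC and holds I there. *)
lemma item_amortized_bound_short:
  fixes a b s R c0 c1 S I J h p :: real
  assumes "0 \<le> a" "a \<le> c1" "0 \<le> c0" "c0 \<le> b" "1 \<le> s" "1 + s \<le> R"
    and h: "h = (if s * c1 < c0 then min S I else 0)"
    and "0 \<le> h" "h < p" "p \<le> S" "p \<le> J"
  shows "c0 * (S - h) + c1 * h + b * (max 0 (J - p - (I - h)) - max 0 (J - I))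
           \<le> R * (c0 * (S - p) + c1 * p)"
proof -
  have grow: "x \<le> R * x" if "0 \<le> x" for x
    using assms(5,6) that by (simp add: mult_le_cancel_right1)
  have "0 \<le> c0 * (S - p)" "0 \<le> c1 * p" using assms(1-3,8-10) by simp_all
  show ?thesis
  proof (cases "s * c1 < c0")
    case True
    with h assms(9,10) have "h = I" by auto
    with assms(9,11) have \<Delta>: "max 0 (J - p - (I - h)) - max 0 (J - I) = h - p" by simp
    have "c0 * (S - h) + c1 * h + b * (max 0 (J - p - (I - h)) - max 0 (J - I))
        = c0 * (S - p) + c1 * h + (c0 - b) * (p - h)"
      unfolding \<Delta> by (simp add: algebra_simps)
    also have "\<dots> \<le> c0 * (S - p) + c1 * p"
    proof -
      have "(c0 - b) * (p - h) \<le> 0" using assms(4,9) by (simp add: mult_nonpos_nonneg)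
      moreover have "c1 * h \<le> c1 * p" using assms(1,2,9) by (simp add: mult_left_mono)
      ultimately show ?thesis by simp
    qed
    also have "\<dots> \<le> R * (c0 * (S - p) + c1 * p)"
      using \<open>0 \<le> c0 * (S - p)\<close> \<open>0 \<le> c1 * p\<close> by (intro grow) simp
    finally show ?thesis .
  next
    case False
    with h have "h = 0" by simp
    with assms(9) have "max 0 (J - p - (I - h)) - max 0 (J - I) \<le> 0" by simp
    then have "b * (max 0 (J - p - (I - h)) - max 0 (J - I)) \<le> 0"
      using assms(3,4) by (simp add: mult_nonneg_nonpos)
    moreover have "c0 * p \<le> R * (c1 * p)"
    proof -
      have "c0 * p \<le> (s * c1) * p" using False \<open>h = 0\<close> assms(9) by (simp add: mult_right_mono)
      also have "\<dots> \<le> R * (c1 * p)"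
        using assms(1,2,6,9) \<open>h = 0\<close> by (simp add: mult.assoc mult_right_mono)
      finally show ?thesis .
    qed
    moreover have "c0 * (S - p) \<le> R * (c0 * (S - p))" using \<open>0 \<le> c0 * (S - p)\<close> by (rule grow)
    ultimately show ?thesis using \<open>h = 0\<close> by (simp add: algebra_simps)
  qed
qed

lemma item_amortized_bound_surplus:
  fixes a b s R c0 c1 S I J h p :: real
  assumes "0 \<le> a" "a \<le> c1" "0 \<le> c0" "c0 \<le> b" "1 \<le> s" "b \<le> s\<^sup>2 * a" "1 + s \<le> R"
    and h: "h = (if s * c1 < c0 then min S I else 0)"
    and "p \<le> h" "0 \<le> p" "h \<le> S"
  shows "c0 * (S - h) + c1 * h + b * (max 0 (J - p - (I - h)) - max 0 (J - I))
           \<le> R * (c0 * (S - p) + c1 * p)"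
proof -
  have "(c1 + b) * (h - p) \<le> R * c0 * (h - p)"
  proof (cases "h = p")
    case False
    with h assms(9,10) have cheap: "s * c1 < c0" by (auto split: if_splits)
    from cheap_costs[OF assms(1,2,5,6) cheap]
    have "c1 < c0" "b \<le> s * c0" by auto
    moreover have "(1 + s) * c0 \<le> R * c0" using assms(3,7) by (simp add: mult_right_mono)
    ultimately have "c1 + b \<le> R * c0" by (simp add: algebra_simps)
    then show ?thesis using assms(9) by (simp add: mult_right_mono)
  qed simp
  moreover have "max 0 (J - p - (I - h)) - max 0 (J - I) \<le> h - p" using assms(9) by simp
  then have "b * (max 0 (J - p - (I - h)) - max 0 (J - I)) \<le> b * (h - p)"
    using assms(3,4) by (simp add: mult_left_mono)
  moreover have "c0 * (S - h) + c1 * p \<le> R * (c0 * (S - h) + c1 * p)"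
  proof -
    have "0 \<le> c0 * (S - h) + c1 * p" using assms(1-3,10,11) by simp
    then show ?thesis using assms(5,7) by (simp add: mult_le_cancel_right1)
  qed
  ultimately show ?thesis by (simp add: algebra_simps)
qed

lemma item_amortized_bound:
  fixes a b s R c0 c1 S I J h p :: real
  assumes "0 \<le> a" "a \<le> c1" "0 \<le> c0" "c0 \<le> b" "1 \<le> s" "b \<le> s\<^sup>2 * a" "1 + s \<le> R"
    and h: "h = (if s * c1 < c0 then min S I else 0)"
    and "0 \<le> h" "0 \<le> p" "p \<le> S" "p \<le> J"
  shows "c0 * (S - h) + c1 * h + b * (max 0 (J - p - (I - h)) - max 0 (J - I))
           \<le> R * (c0 * (S - p) + c1 * p)"
proof (cases "h < p")
  case True
  with item_amortized_bound_short[OF assms(1-5,7,8,9) _ assms(11,12)] show ?thesis .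
next
  case False
  have "h \<le> S" using h assms(10,11) by (auto split: if_splits)
  with False item_amortized_bound_surplus[OF assms(1-8) _ assms(10)] show ?thesis by simp
qed

lemma item_potential_increase_bound:
  fixes a b s R c0 c1 S I J h :: real
  assumes "0 \<le> a" "a \<le> c1" "0 \<le> c0" "c0 \<le> b" "1 \<le> s" "b \<le> s\<^sup>2 * a" "1 + s \<le> R"
    and h: "h = (if s * c1 < c0 then min S I else 0)"
    and "0 \<le> h" "h \<le> S"
  shows "b * (max 0 (J - (I - h)) - max 0 (J - I)) \<le> (R - 1) * (c0 * S)"
proof -
  have "max 0 (J - (I - h)) - max 0 (J - I) \<le> h" using assms(9) by simp
  then have "b * (max 0 (J - (I - h)) - max 0 (J - I)) \<le> b * h"
    using assms(3,4) by (simp add: mult_left_mono)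
  also have "\<dots> \<le> (R - 1) * (c0 * S)"
  proof (cases "h = 0")
    case True
    then show ?thesis using assms by simp
  next
    case False
    with h have "s * c1 < c0" by (auto split: if_splits)
    from cheap_costs(2)[OF assms(1,2,5,6) this]
    have "b * h \<le> (s * c0) * h" using assms(9) by (simp add: mult_right_mono)
    also have "\<dots> \<le> ((R - 1) * c0) * S"
      using assms by (intro mult_mono) (auto intro: mult_right_mono)
    finally show ?thesis by (simp add: mult.assoc)
  qed
  finally show ?thesis .
qed

definition split_cost ::
  "real \<Rightarrow> real \<Rightarrow> nat \<Rightarrow> (nat \<Rightarrow> real) \<Rightarrow> (nat \<Rightarrow> real) \<Rightarrow> (nat \<Rightarrow> nat) \<Rightarrow> (nat \<Rightarrow> nat) \<Rightarrow> real"
  where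
  "split_cost f0 f1 n c0 c1 S q =
     (f0 * ind ((\<Sum>i<n. S i - q i) > 0) + (\<Sum>i<n. c0 i * real (S i - q i)))
   + (f1 * ind ((\<Sum>i<n. q i) > 0) + (\<Sum>i<n. c1 i * real (q i)))"

lemma period_cost_eq_split_cost:
  assumes "\<And>i. i < n \<Longrightarrow> m0 t i = S t i - m1 t i"
  shows "period_cost f0 f1 n c0 c1 m0 m1 t = split_cost f0 f1 n (c0 t) (c1 t) (S t) (m1 t)"
  unfolding period_cost_def split_cost_def using assms by simp

lemma split_cost_rdc_only:
  "split_cost f0 f1 n c0 c1 S (\<lambda>_. 0) = f0 * ind ((\<Sum>i<n. S i) > 0) + (\<Sum>i<n. c0 i * real (S i))"
  by (simp add: split_cost_def ind_def)

lemma ccav_step_eq: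
  "ccav_step a b f0 f1 n S c0 c1 I t =
     (if split_cost f0 f1 n (c0 t) (c1 t) (S t) (hat_m1 a b S c0 c1 I t)
           > f0 + (\<Sum>i<n. c0 t i * real (S t i))
      then (\<lambda>_. 0) else hat_m1 a b S c0 c1 I t)"
  unfolding ccav_step_def split_cost_def period_cost_def Let_def by simp

lemma cost_comparison_le:
  assumes "0 \<le> f0" and "\<And>i. i < n \<Longrightarrow> h i \<le> S i"
    and u: "u = (if split_cost f0 f1 n c0 c1 S h > f0 + (\<Sum>i<n. c0 i * real (S i))
                 then (\<lambda>_. 0) else h)"
  shows "split_cost f0 f1 n c0 c1 S u \<le> split_cost f0 f1 n c0 c1 S h"
    and "split_cost f0 f1 n c0 c1 S u \<le> split_cost f0 f1 n c0 c1 S (\<lambda>_. 0)"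
proof -
  have rdc_le: "split_cost f0 f1 n c0 c1 S (\<lambda>_. 0) \<le> f0 + (\<Sum>i<n. c0 i * real (S i))"
    using assms(1) by (simp add: split_cost_rdc_only ind_def)
  have "split_cost f0 f1 n c0 c1 S h \<le> split_cost f0 f1 n c0 c1 S (\<lambda>_. 0)"
    if accept: "split_cost f0 f1 n c0 c1 S h \<le> f0 + (\<Sum>i<n. c0 i * real (S i))"
  proof (cases "(\<Sum>i<n. S i) > 0")
    case True
    with accept show ?thesis by (simp add: split_cost_rdc_only ind_def)
  next
    case False
    then have "h i = 0" if "i < n" for i using assms(2)[OF that] that by simp
    then have "split_cost f0 f1 n c0 c1 S h = split_cost f0 f1 n c0 c1 S (\<lambda>_. 0)"
      unfolding split_cost_def by simp
    then show ?thesis by simp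
  qed
  with u rdc_le show "split_cost f0 f1 n c0 c1 S u \<le> split_cost f0 f1 n c0 c1 S h"
    and "split_cost f0 f1 n c0 c1 S u \<le> split_cost f0 f1 n c0 c1 S (\<lambda>_. 0)"
    by auto
qed

lemma split_cost_amortized_bound_fdc_used:
  fixes a b s R f0 f1 A :: real and n :: nat and S h p I :: "nat \<Rightarrow> nat"
    and J :: "nat \<Rightarrow> int" and c0 c1 :: "nat \<Rightarrow> real"
  assumes "0 \<le> a" "1 \<le> s" "b \<le> s\<^sup>2 * a" "1 + s \<le> R"
    and "0 \<le> f0" "0 \<le> f1" "f0 + f1 \<le> R * f1"
    and costs: "\<And>i. i < n \<Longrightarrow> a \<le> c0 i \<and> c0 i \<le> b \<and> a \<le> c1 i"
    and h: "\<And>i. i < n \<Longrightarrow> h i = (if s * c1 i < c0 i then min (S i) (I i) else 0)"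
    and p: "\<And>i. i < n \<Longrightarrow> p i \<le> S i \<and> int (p i) \<le> J i" and "0 < (\<Sum>i<n. p i)"
    and "A \<le> split_cost f0 f1 n c0 c1 S h"
  shows "A + b * (\<Sum>i<n. max 0 (of_int (J i - int (p i)) - real (I i - h i))
                         - max 0 (of_int (J i) - real (I i)))
           \<le> R * split_cost f0 f1 n c0 c1 S p"
    (is "A + b * (\<Sum>i<n. ?\<Delta> i) \<le> _")
proof -
  have item: "c0 i * real (S i - h i) + c1 i * real (h i) + b * ?\<Delta> i
      \<le> R * (c0 i * real (S i - p i) + c1 i * real (p i))" if "i < n" for i
  proof -
    have "h i \<le> S i" "h i \<le> I i" using h[OF that] by auto
    moreover have "real (h i) = (if s * c1 i < c0 i then min (real (S i)) (real (I i)) else 0)"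
      using h[OF that] by (simp add: of_nat_min)
    ultimately show ?thesis
      using item_amortized_bound[OF assms(1) _ _ _ assms(2-4), of "c1 i" "c0 i" "real (h i)"
          "real (S i)" "real (I i)" "real (p i)" "of_int (J i)"] costs[OF that] p[OF that] assms(1)
      by (simp add: of_nat_diff)
  qed
  have fixed: "f0 * ind ((\<Sum>i<n. S i - h i) > 0) + f1 * ind ((\<Sum>i<n. h i) > 0) \<le> R * f1"
    using assms(5-7) by (simp add: ind_def)
  have "A + b * (\<Sum>i<n. ?\<Delta> i)
      \<le> f0 * ind ((\<Sum>i<n. S i - h i) > 0) + f1 * ind ((\<Sum>i<n. h i) > 0)
        + (\<Sum>i<n. c0 i * real (S i - h i) + c1 i * real (h i) + b * ?\<Delta> i)"
    using assms(12) by (simp add: split_cost_def sum.distrib sum_distrib_left)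
  also have "\<dots> \<le> R * f1 + (\<Sum>i<n. R * (c0 i * real (S i - p i) + c1 i * real (p i)))"
    using fixed item by (intro add_mono sum_mono) auto
  also have "\<dots> \<le> R * split_cost f0 f1 n c0 c1 S p"
    using assms(2,4,5,11) by (simp add: split_cost_def ind_def sum_distrib_left sum.distrib algebra_simps)
  finally show ?thesis .
qed

lemma split_cost_amortized_bound_rdc_only:
  fixes a b s R f0 f1 A :: real and n :: nat and S h I :: "nat \<Rightarrow> nat"
    and J :: "nat \<Rightarrow> int" and c0 c1 :: "nat \<Rightarrow> real"
  assumes "0 \<le> a" "1 \<le> s" "b \<le> s\<^sup>2 * a" "1 + s \<le> R" "0 \<le> f0"
    and costs: "\<And>i. i < n \<Longrightarrow> a \<le> c0 i \<and> c0 i \<le> b \<and> a \<le> c1 i"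
    and h: "\<And>i. i < n \<Longrightarrow> h i = (if s * c1 i < c0 i then min (S i) (I i) else 0)"
    and "A \<le> split_cost f0 f1 n c0 c1 S (\<lambda>_. 0)"
  shows "A + b * (\<Sum>i<n. max 0 (of_int (J i) - real (I i - h i)) - max 0 (of_int (J i) - real (I i)))
           \<le> R * split_cost f0 f1 n c0 c1 S (\<lambda>_. 0)"
    (is "A + b * (\<Sum>i<n. ?\<Delta> i) \<le> R * ?F")
proof -
  have idle: "b * ?\<Delta> i \<le> (R - 1) * (c0 i * real (S i))" if "i < n" for i
  proof -
    have "h i \<le> S i" "h i \<le> I i" using h[OF that] by auto
    moreover have "real (h i) = (if s * c1 i < c0 i then min (real (S i)) (real (I i)) else 0)"
      using h[OF that] by (simp add: of_nat_min)
    ultimately show ?thesis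
      using item_potential_increase_bound[OF assms(1) _ _ _ assms(2-4), of "c1 i" "c0 i" "real (h i)"
          "real (S i)" "real (I i)" "of_int (J i)"] costs[OF that] assms(1)
      by (simp add: of_nat_diff)
  qed
  have "b * (\<Sum>i<n. ?\<Delta> i) \<le> (R - 1) * (\<Sum>i<n. c0 i * real (S i))"
    unfolding sum_distrib_left using idle by (intro sum_mono) simp
  also have "\<dots> \<le> (R - 1) * ?F"
    using assms(2,4,5) by (intro mult_left_mono) (auto simp: split_cost_rdc_only ind_def)
  finally show ?thesis using assms(8) by (simp add: algebra_simps)
qed

lemma split_cost_amortized_bound:
  fixes a b s R f0 f1 A :: real and n :: nat and S h p I :: "nat \<Rightarrow> nat"
    and J :: "nat \<Rightarrow> int" and c0 c1 :: "nat \<Rightarrow> real"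
  assumes "0 \<le> a" "1 \<le> s" "b \<le> s\<^sup>2 * a" "1 + s \<le> R"
    and "0 \<le> f0" "0 \<le> f1" "f0 + f1 \<le> R * f1"
    and costs: "\<And>i. i < n \<Longrightarrow> a \<le> c0 i \<and> c0 i \<le> b \<and> a \<le> c1 i"
    and h: "\<And>i. i < n \<Longrightarrow> h i = (if s * c1 i < c0 i then min (S i) (I i) else 0)"
    and p: "\<And>i. i < n \<Longrightarrow> p i \<le> S i \<and> int (p i) \<le> J i"
    and "A \<le> split_cost f0 f1 n c0 c1 S h" "A \<le> split_cost f0 f1 n c0 c1 S (\<lambda>_. 0)"
  shows "A + b * (\<Sum>i<n. max 0 (of_int (J i - int (p i)) - real (I i - h i))
                         - max 0 (of_int (J i) - real (I i)))
           \<le> R * split_cost f0 f1 n c0 c1 S p"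
proof (cases "0 < (\<Sum>i<n. p i)")
  case True
  from split_cost_amortized_bound_fdc_used[OF assms(1-10) True assms(11)] show ?thesis .
next
  case False
  then have p0: "p i = 0" if "i < n" for i using that by simp
  then have "split_cost f0 f1 n c0 c1 S p = split_cost f0 f1 n c0 c1 S (\<lambda>_. 0)"
    unfolding split_cost_def by simp
  with p0 split_cost_amortized_bound_rdc_only[OF assms(1-5,8,9,12), of J] show ?thesis by simp
qed

definition potential ::
  "real \<Rightarrow> nat \<Rightarrow> (nat \<Rightarrow> nat) \<Rightarrow> (nat \<Rightarrow> nat \<Rightarrow> nat) \<Rightarrow> (nat \<Rightarrow> nat \<Rightarrow> nat) \<Rightarrow> nat \<Rightarrow> real"
  where
  "potential b n I0 m1 I t = b * (\<Sum>i<n. max 0 (of_int (fdc_inv I0 m1 t i) - real (I t i)))"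

lemma fdc_inv_0: "fdc_inv I0 m1 0 i = int (I0 i)"
  unfolding fdc_inv_def by simp

lemma fdc_inv_Suc: "fdc_inv I0 m1 (Suc k) i = fdc_inv I0 m1 k i - int (m1 (Suc k) i)"
  unfolding fdc_inv_def by (simp add: sum.cl_ivl_Suc)

lemma potential_Suc_le:
  assumes "0 \<le> b" and "\<And>i. i < n \<Longrightarrow> I k i - h i \<le> I (Suc k) i"
  shows "potential b n I0 m1 I (Suc k) - potential b n I0 m1 I k
           \<le> b * (\<Sum>i<n. max 0 (of_int (fdc_inv I0 m1 k i - int (m1 (Suc k) i)) - real (I k i - h i))
                         - max 0 (of_int (fdc_inv I0 m1 k i) - real (I k i)))"
proof -
  have "(\<Sum>i<n. max 0 (of_int (fdc_inv I0 m1 (Suc k) i) - real (I (Suc k) i)))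
      \<le> (\<Sum>i<n. max 0 (of_int (fdc_inv I0 m1 k i - int (m1 (Suc k) i)) - real (I k i - h i)))"
  proof (intro sum_mono)
    fix i assume "i \<in> {..<n}"
    then have "real (I k i - h i) \<le> real (I (Suc k) i)" using assms(2) by simp
    then show "max 0 (of_int (fdc_inv I0 m1 (Suc k) i) - real (I (Suc k) i))
        \<le> max 0 (of_int (fdc_inv I0 m1 k i - int (m1 (Suc k) i)) - real (I k i - h i))"
      by (simp add: fdc_inv_Suc)
  qed
  with assms(1) show ?thesis
    unfolding potential_def by (simp add: sum_subtractf right_diff_distrib[symmetric] mult_left_mono)
qed

lemma sum_le_by_potential:
  fixes x y \<Phi> :: "nat \<Rightarrow> real"
  assumes "\<And>k. k < T \<Longrightarrow> x (Suc k) + (\<Phi> (Suc k) - \<Phi> k) \<le> y (Suc k)" and "\<Phi> 0 = 0"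
  shows "(\<Sum>t\<in>{1..T}. x t) + \<Phi> T \<le> (\<Sum>t\<in>{1..T}. y t)"
  using assms(1)
proof (induction T)
  case 0
  then show ?case using assms(2) by simp
next
  case (Suc T)
  then have "(\<Sum>t\<in>{1..T}. x t) + \<Phi> T \<le> (\<Sum>t\<in>{1..T}. y t)" by simp
  moreover have "x (Suc T) + (\<Phi> (Suc T) - \<Phi> T) \<le> y (Suc T)" using Suc.prems by simp
  ultimately show ?case by (simp add: sum.cl_ivl_Suc)
qed

lemma feasible_SucD:
  assumes "feasible n T I0 S m0 m1" "k < T" "i < n"
  shows "m0 (Suc k) i = S (Suc k) i - m1 (Suc k) i" "m1 (Suc k) i \<le> S (Suc k) i"
    and "int (m1 (Suc k) i) \<le> fdc_inv I0 m1 k i"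
proof -
  have "m0 (Suc k) i + m1 (Suc k) i = S (Suc k) i \<and> int (m1 (Suc k) i) \<le> fdc_inv I0 m1 k i"
    using assms unfolding feasible_def by (metis Suc_leI atLeastAtMost_iff diff_Suc_1 le_add1 plus_1_eq_Suc)
  then show "m0 (Suc k) i = S (Suc k) i - m1 (Suc k) i" "m1 (Suc k) i \<le> S (Suc k) i"
    and "int (m1 (Suc k) i) \<le> fdc_inv I0 m1 k i" by auto
qed

lemma ccav_period_cost:
  "period_cost f0 f1 n c0 c1 (ccav_m0 a b f0 f1 n I0 S c0 c1) (ccav_m1 a b f0 f1 n I0 S c0 c1) (Suc k)
     = split_cost f0 f1 n (c0 (Suc k)) (c1 (Suc k)) (S (Suc k))
         (ccav_step a b f0 f1 n S c0 c1 (ccav_inv a b f0 f1 n I0 S c0 c1 k) (Suc k))"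
proof -
  have "ccav_m1 a b f0 f1 n I0 S c0 c1 (Suc k)
      = ccav_step a b f0 f1 n S c0 c1 (ccav_inv a b f0 f1 n I0 S c0 c1 k) (Suc k)"
    by (rule ext) (simp add: ccav_m1_def)
  then show ?thesis by (subst period_cost_eq_split_cost) (simp_all add: ccav_m0_def)
qed

lemma ccav_amortized_bound:
  fixes a b f0 f1 R :: real
  assumes "0 < a" "a < b" "0 \<le> f0" "0 \<le> f1"
    and "1 + sqrt (b / a) \<le> R" "f0 + f1 \<le> R * f1"
    and c0: "\<And>i. i < n \<Longrightarrow> a \<le> c0 (Suc k) i \<and> c0 (Suc k) i \<le> b"
    and c1: "\<And>i. i < n \<Longrightarrow> a \<le> c1 (Suc k) i"
    and plan: "feasible n T I0 S m0 m1" "k < T"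
  shows "period_cost f0 f1 n c0 c1 (ccav_m0 a b f0 f1 n I0 S c0 c1) (ccav_m1 a b f0 f1 n I0 S c0 c1) (Suc k)
         + (potential b n I0 m1 (ccav_inv a b f0 f1 n I0 S c0 c1) (Suc k)
            - potential b n I0 m1 (ccav_inv a b f0 f1 n I0 S c0 c1) k)
         \<le> R * period_cost f0 f1 n c0 c1 m0 m1 (Suc k)"
proof -
  define s where "s = sqrt (b / a)"
  define I where "I = ccav_inv a b f0 f1 n I0 S c0 c1 k"
  define h where "h = hat_m1 a b S c0 c1 I (Suc k)"
  define u where "u = ccav_step a b f0 f1 n S c0 c1 I (Suc k)"
  let ?cost = "split_cost f0 f1 n (c0 (Suc k)) (c1 (Suc k)) (S (Suc k))"
  have s: "1 \<le> s" "b \<le> s\<^sup>2 * a" "1 + s \<le> R" using assms(1,2,5) by (auto simp: s_def)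
  have hS: "h i \<le> S (Suc k) i" and uh: "u i \<le> h i" for i
    unfolding h_def u_def hat_m1_def ccav_step_def Let_def by auto
  have "u = (if ?cost h > f0 + (\<Sum>i<n. c0 (Suc k) i * real (S (Suc k) i)) then (\<lambda>_. 0) else h)"
    unfolding u_def h_def by (rule ccav_step_eq)
  then have guard: "?cost u \<le> ?cost h" "?cost u \<le> ?cost (\<lambda>_. 0)"
    using cost_comparison_le[OF assms(3)] hS by auto
  have "?cost u + b * (\<Sum>i<n. max 0 (of_int (fdc_inv I0 m1 k i - int (m1 (Suc k) i)) - real (I i - h i))
                             - max 0 (of_int (fdc_inv I0 m1 k i) - real (I i)))
      \<le> R * ?cost (m1 (Suc k))"
  proof (rule split_cost_amortized_bound[where s = s and h = h])
    show "h i = (if s * c1 (Suc k) i < c0 (Suc k) i then min (S (Suc k) i) (I i) else 0)"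
      if "i < n" for i
      using c0[OF that] cheap_iff_threshold[OF assms(1,2)] unfolding h_def hat_m1_def s_def by simp
  qed (use assms s c0 c1 feasible_SucD[OF plan] guard in auto)
  moreover have "potential b n I0 m1 (ccav_inv a b f0 f1 n I0 S c0 c1) (Suc k)
      - potential b n I0 m1 (ccav_inv a b f0 f1 n I0 S c0 c1) k
      \<le> b * (\<Sum>i<n. max 0 (of_int (fdc_inv I0 m1 k i - int (m1 (Suc k) i)) - real (I i - h i))
                    - max 0 (of_int (fdc_inv I0 m1 k i) - real (I i)))"
    unfolding I_def using assms(1,2) uh
    by (intro potential_Suc_le) (auto simp: u_def I_def intro: diff_le_mono2)
  moreover have "period_cost f0 f1 n c0 c1 m0 m1 (Suc k) = ?cost (m1 (Suc k))"
    using feasible_SucD(1)[OF plan] by (rule period_cost_eq_split_cost)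
  ultimately show ?thesis unfolding ccav_period_cost u_def I_def by simp
qed

lemma ccav_le_plan:
  fixes a b f0 f1 R :: real
  assumes "0 < a" "a < b" "0 \<le> f0" "0 \<le> f1"
    and "1 + sqrt (b / a) \<le> R" "f0 + f1 \<le> R * f1"
    and "\<And>t i. t \<in> {1..T} \<Longrightarrow> i < n \<Longrightarrow> a \<le> c0 t i \<and> c0 t i \<le> b"
    and "\<And>t i. t \<in> {1..T} \<Longrightarrow> i < n \<Longrightarrow> a \<le> c1 t i"
    and "feasible n T I0 S m0 m1"
  shows "ALG_ccav a b f0 f1 n T I0 S c0 c1 \<le> R * total_cost f0 f1 n T c0 c1 m0 m1"
proof -
  let ?\<Phi> = "potential b n I0 m1 (ccav_inv a b f0 f1 n I0 S c0 c1)"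
  have "ALG_ccav a b f0 f1 n T I0 S c0 c1 + ?\<Phi> T
      \<le> (\<Sum>t\<in>{1..T}. R * period_cost f0 f1 n c0 c1 m0 m1 t)"
    unfolding ALG_ccav_def total_cost_def
  proof (rule sum_le_by_potential)
    show "?\<Phi> 0 = 0" by (simp add: potential_def fdc_inv_0)
  qed (rule ccav_amortized_bound[OF assms(1-6) _ _ assms(9)]; use assms(7,8) in auto)
  moreover have "0 \<le> ?\<Phi> T"
    unfolding potential_def using assms(1,2) by (intro mult_nonneg_nonneg sum_nonneg) auto
  ultimately show ?thesis by (simp add: total_cost_def sum_distrib_left)
qed

theorem theorem5:
  fixes a b f0 f1 :: real
    and n T :: nat
    and I0 :: "nat \<Rightarrow> nat"
    and S :: "nat \<Rightarrow> nat \<Rightarrow> nat"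
    and c0 c1 :: "nat \<Rightarrow> nat \<Rightarrow> real"
  assumes "0 < a" and "a < b" and "0 \<le> f0" and "0 < f1"
    and "\<And>t i. t \<in> {1..T} \<Longrightarrow> i < n \<Longrightarrow> a \<le> c0 t i \<and> c0 t i \<le> b"
    and "\<And>t i. t \<in> {1..T} \<Longrightarrow> i < n \<Longrightarrow> a \<le> c1 t i \<and> c1 t i \<le> b"
  shows "ALG_ccav a b f0 f1 n T I0 S c0 c1
           \<le> (1 + max (f0 / f1) (sqrt (b / a))) * OPT f0 f1 n T I0 S c0 c1"
proof -
  define R where "R = 1 + max (f0 / f1) (sqrt (b / a))"
  have R_sqrt: "1 + sqrt (b / a) \<le> R" by (simp add: R_def)
  moreover have "0 \<le> sqrt (b / a)" using assms(1,2) by simp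
  ultimately have "0 < R" by linarith
  have "f0 = f0 / f1 * f1" using assms(4) by simp
  also have "\<dots> \<le> max (f0 / f1) (sqrt (b / a)) * f1" using assms(4) by (intro mult_right_mono) auto
  finally have R_fixed: "f0 + f1 \<le> R * f1" by (simp add: R_def algebra_simps)
  have alg_le: "ALG_ccav a b f0 f1 n T I0 S c0 c1 / R \<le> total_cost f0 f1 n T c0 c1 m0 m1"
    if "feasible n T I0 S m0 m1" for m0 m1
    using ccav_le_plan[OF assms(1-3) _ R_sqrt R_fixed assms(5) _ that] assms(4,6) \<open>0 < R\<close>
    by (simp add: pos_divide_le_eq mult.commute)
  have "feasible n T I0 S S (\<lambda>_ _. 0)" unfolding feasible_def fdc_inv_def by auto
  then have "ALG_ccav a b f0 f1 n T I0 S c0 c1 / R \<le> OPT f0 f1 n T I0 S c0 c1"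
    unfolding OPT_def using alg_le by (intro cInf_greatest) auto
  with \<open>0 < R\<close> show ?thesis by (simp add: R_def pos_divide_le_eq mult.commute)
qed

end
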